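(* Let $\beta=\beta_1\cdots\beta_p$ be a finite word over $\{1,2\}$ and let $\theta=\theta_1\cdots\theta_{2r}$ ($r\ge 1$) be a finite word over $\{1,2\}$ of even length which is symmetric, i.e. $\theta_j=\theta_{2r+1-j}$ for all $j$. For infinite words $\omega_1=\omega_1(1)\omega_1(2)\cdots$ and $\omega_2=\omega_2(1)\omega_2(2)\cdots$ over $\{1,2\}$, let $\gamma=\gamma(\omega_1,\omega_2)\in\{1,2\}^{\mathbb{Z}}$ be the bi-infinite word $\omega_2^t\beta^t\,2\,\theta\,2\,\beta\,\omega_1$ (where ${}^t$ denotes reversal), indexed so that $\gamma_0=2$, $\gamma_j=\theta_j$ for $1\le j\le 2r$, $\gamma_{2r+1}=2$, $\gamma_{2r+1+j}=\beta_j$ for $1\le j\le p$, $\gamma_{2r+1+p+j}=\omega_1(j)$ for $j\ge1$, $\gamma_{-j}=\beta_j$ for $1\le j\le p$, and $\gamma_{-p-j}=\omega_2(j)$ for $j\ge 1$. Let $S$ be a set of infinite words over $\{1,2\}$ (for instance, those avoiding a given finite list of finite strings) such that for all $\omega_1,\omega_2\in S$ the Markov value $m(\gamma(\omega_1,\omega_2))=\sup_{n\in\mathbb{Z}}\lambda_n(\gamma(\omega_1,\omega_2))$ is attained at one of the two positions $0$ or $2r+1$ (the $2$'s adjacent to $\theta$), i.e. $m(\gamma)=\max\{\lambda_0(\gamma),\lambda_{2r+1}(\gamma)\}$. Then, among $\omega_1,\omega_2\in S$, the Markov value $m(\gamma(\omega_1,\omega_2))$ is minimal when $\omega_1=\omega_2=:\omega$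 and $[0;\beta,\omega]$ is minimal. Precisely: for all $\omega_1,\omega_2\in S$, $m(\gamma(\omega_1,\omega_2))\ge \max\{m(\gamma(\omega_1,\omega_1)),m(\gamma(\omega_2,\omega_2))\}$, and for $\omega,\omega'\in S$ with $[0;\beta,\omega]\le[0;\beta,\omega']$ one has $m(\gamma(\omega,\omega))\le m(\gamma(\omega',\omega'))$.
   Context: For $\underline{\alpha}=(\alpha_n)_{n\in\mathbb{Z}}\in\{1,2\}^{\mathbb{Z}}$ and $k\in\mathbb{Z}$, $\lambda_k(\underline{\alpha})=[\alpha_k;\alpha_{k+1},\alpha_{k+2},\dots]+[0;\alpha_{k-1},\alpha_{k-2},\dots]$, where $[b_0;b_1,b_2,\dots]=b_0+1/(b_1+1/(b_2+\cdots))$. For a finite word $\beta$ and infinite word $\omega$, $[0;\beta,\omega]$ denotes the continued fraction whose partial quotients are the letters of $\beta$ followed by those of $\omega$. *)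

theory Defs
  imports Complex_Main
begin

primrec cf_approx :: "nat \<Rightarrow> (nat \<Rightarrow> nat) \<Rightarrow> real" where
  "cf_approx 0 b = real (b 0)"
| "cf_approx (Suc n) b = real (b 0) + 1 / cf_approx n (\<lambda>k. b (Suc k))"

definition cf :: "(nat \<Rightarrow> nat) \<Rightarrow> real" where
  "cf b = lim (\<lambda>n. cf_approx n b)"

definition cf0 :: "(nat \<Rightarrow> nat) \<Rightarrow> real" where
  "cf0 a = cf (\<lambda>n. if n = 0 then 0 else a (n - 1))"

definition lam :: "int \<Rightarrow> (int \<Rightarrow> nat) \<Rightarrow> real" where
  "lam k \<alpha> = cf (\<lambda>n. \<alpha> (k + int n)) + cf0 (\<lambda>n. \<alpha> (k - 1 - int n))"

definition markov :: "(int \<Rightarrow> nat) \<Rightarrow> real" where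
  "markov \<alpha> = (SUP k. lam k \<alpha>)"

definition prepend :: "nat list \<Rightarrow> (nat \<Rightarrow> nat) \<Rightarrow> (nat \<Rightarrow> nat)" where
  "prepend xs \<omega> = (\<lambda>n. if n < length xs then xs ! n else \<omega> (n - length xs))"

text \<open>Infinite words are indexed from 0, i.e. omega(j) of the paper is omega (j-1).\<close>
definition gamma :: "nat list \<Rightarrow> nat list \<Rightarrow> (nat \<Rightarrow> nat) \<Rightarrow> (nat \<Rightarrow> nat) \<Rightarrow> (int \<Rightarrow> nat)" where
  "gamma \<beta> \<theta> \<omega>1 \<omega>2 = (\<lambda>j.
     let L = int (length \<theta>); p = int (length \<beta>) in
     if j = 0 then 2
     else if 1 \<le> j \<and> j \<le> L then \<theta> ! nat (j - 1)
     else if j = L + 1 then 2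
     else if L + 1 < j \<and> j \<le> L + 1 + p then \<beta> ! nat (j - L - 2)
     else if L + 1 + p < j then \<omega>1 (nat (j - L - 2 - p))
     else if - p \<le> j then \<beta> ! nat (- j - 1)
     else \<omega>2 (nat (- j - p - 1)))"

end

theory Submission
  imports Defs
begin

(* Put x_i = [0; beta, omega_i] and h(x) = [0; theta, 2 + x]. Then lambda_0(gamma) = 2 + h(x_1) + x_2
   and, theta being a palindrome, lambda_{2r+1}(gamma) = 2 + x_1 + h(x_2). Since theta has even length,
   h is decreasing, and since y |-> 1/y and the maps y |-> [a_1; ..., a_k, y] (all a_i >= 1) are
   non-expanding on [1, oo), h is 1-Lipschitz. Hence m(gamma(omega_1, omega_2)) =
   2 + max (h(x_1) + x_2) (x_1 + h(x_2)) dominates m(gamma(omega_i, omega_i)) = 2 + x_i + h(x_i) for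
   both i, and x + h(x) is nondecreasing. Two consecutive partial quotients even contract distances by
   a factor 1/4, which gives the convergence of the infinite continued fractions. *)

primrec cf_fin :: "nat list \<Rightarrow> real \<Rightarrow> real" where
  "cf_fin [] y = y"
| "cf_fin (a # as) y = real a + 1 / cf_fin as y"

lemma cf_fin_append: "cf_fin (xs @ ys) y = cf_fin xs (cf_fin ys y)"
  by (induction xs) simp_all

lemma cf_fin_ge_1: "0 \<notin> set xs \<Longrightarrow> 1 \<le> y \<Longrightarrow> 1 \<le> cf_fin xs y"
proof (induction xs)
  case (Cons a xs)
  then have "1 \<le> real a" and "0 < 1 / cf_fin xs y" by auto
  then show ?case unfolding cf_fin.simps by linarith
qed simp

lemma cf_fin_mono_even:
  assumes "0 \<notin> set xs" "even (length xs)" "1 \<le> y" "y \<le> z"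
  shows "cf_fin xs y \<le> cf_fin xs z"
  using assms
proof (induction xs rule: induct_list012)
  case (3 a b xs)
  let ?Y = "cf_fin xs y" and ?Z = "cf_fin xs z"
  have "1 \<le> ?Y" "?Y \<le> ?Z" using 3 cf_fin_ge_1 by auto
  then have "real b + 1 / ?Z \<le> real b + 1 / ?Y" by (simp add: frac_le)
  moreover have "0 < real b + 1 / ?Z" using \<open>1 \<le> ?Y\<close> \<open>?Y \<le> ?Z\<close> by (simp add: add_nonneg_pos)
  ultimately show ?case by (simp add: frac_le)
qed simp_all

lemma abs_diff_inverse_le:
  fixes u v :: real
  assumes "1 \<le> u" "1 \<le> v"
  shows "\<bar>1 / u - 1 / v\<bar> \<le> \<bar>u - v\<bar>"
proof -
  have uv: "1 \<le> u * v" using assms mult_mono[of 1 u 1 v] by simp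
  have "\<bar>1 / u - 1 / v\<bar> = \<bar>u - v\<bar> / (u * v)" using assms by (simp add: field_simps abs_minus_commute)
  also have "\<dots> \<le> \<bar>u - v\<bar>" using uv by (simp add: divide_le_eq mult_le_cancel_left1)
  finally show ?thesis .
qed

lemma abs_diff_inverse_add_inverse_le:
  fixes b x z :: real
  assumes "1 \<le> b" "1 \<le> x" "1 \<le> z"
  shows "\<bar>1 / (b + 1 / x) - 1 / (b + 1 / z)\<bar> \<le> \<bar>x - z\<bar> / 4"
proof -
  have bx: "1 \<le> b * x" and bz: "1 \<le> b * z"
    using assms mult_mono[of 1 b 1 x] mult_mono[of 1 b 1 z] by simp_all
  have "1 / (b + 1 / x) = x / (b * x + 1)" "1 / (b + 1 / z) = z / (b * z + 1)"
    using assms by (simp_all add: field_simps)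
  moreover have "x / (b * x + 1) - z / (b * z + 1) = (x - z) / ((b * x + 1) * (b * z + 1))"
  proof -
    have "b * x + 1 \<noteq> 0" "b * z + 1 \<noteq> 0" using bx bz by linarith+
    then show ?thesis by (simp add: diff_frac_eq) (simp add: algebra_simps)
  qed
  moreover have "4 \<le> (b * x + 1) * (b * z + 1)"
    using bx bz mult_mono[of 2 "b * x + 1" 2 "b * z + 1"] by simp
  ultimately have "\<bar>1 / (b + 1 / x) - 1 / (b + 1 / z)\<bar> = \<bar>x - z\<bar> / ((b * x + 1) * (b * z + 1))"
    by (simp add: abs_divide)
  also have "\<dots> \<le> \<bar>x - z\<bar> / 4"
    using \<open>4 \<le> (b * x + 1) * (b * z + 1)\<close> by (intro divide_left_mono) auto
  finally show ?thesis .
qed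

lemma cf_fin_contract:
  assumes "0 \<notin> set xs" "1 \<le> y" "1 \<le> z"
  shows "\<bar>cf_fin xs y - cf_fin xs z\<bar> \<le> \<bar>y - z\<bar> / 4 ^ (length xs div 2)"
  using assms
proof (induction xs rule: induct_list012)
  case (2 a)
  then show ?case using abs_diff_inverse_le by simp
next
  case (3 a b xs)
  let ?Y = "cf_fin xs y" and ?Z = "cf_fin xs z"
  have "\<bar>cf_fin (a # b # xs) y - cf_fin (a # b # xs) z\<bar> \<le> \<bar>?Y - ?Z\<bar> / 4"
    using 3 cf_fin_ge_1 abs_diff_inverse_add_inverse_le[of b ?Y ?Z] by simp
  also have "\<dots> \<le> \<bar>y - z\<bar> / 4 ^ (length xs div 2) / 4"
    using 3 by (simp add: divide_right_mono)
  finally show ?case by (simp add: field_simps)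
qed simp

lemma cf_fin_lipschitz:
  assumes "0 \<notin> set xs" "1 \<le> y" "1 \<le> z"
  shows "\<bar>cf_fin xs y - cf_fin xs z\<bar> \<le> \<bar>y - z\<bar>"
proof -
  have "\<bar>y - z\<bar> / 4 ^ (length xs div 2) \<le> \<bar>y - z\<bar> / 1"
    by (rule divide_left_mono) auto
  then show ?thesis using cf_fin_contract[OF assms] by simp
qed

lemma inverse_cf_fin_antimono_even:
  assumes "0 \<notin> set xs" "even (length xs)" "1 \<le> y" "y \<le> z"
  shows "1 / cf_fin xs z \<le> 1 / cf_fin xs y"
proof -
  have "1 \<le> cf_fin xs y" using assms(1,3) by (rule cf_fin_ge_1)
  moreover have "cf_fin xs y \<le> cf_fin xs z" using assms by (rule cf_fin_mono_even)
  ultimately show ?thesis by (intro divide_left_mono) (auto intro: mult_pos_pos)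
qed

lemma inverse_cf_fin_lipschitz:
  assumes "0 \<notin> set xs" "1 \<le> y" "1 \<le> z"
  shows "\<bar>1 / cf_fin xs y - 1 / cf_fin xs z\<bar> \<le> \<bar>y - z\<bar>"
proof -
  have "1 \<le> cf_fin xs y" "1 \<le> cf_fin xs z" using assms by (simp_all add: cf_fin_ge_1)
  then have "\<bar>1 / cf_fin xs y - 1 / cf_fin xs z\<bar> \<le> \<bar>cf_fin xs y - cf_fin xs z\<bar>"
    by (rule abs_diff_inverse_le)
  also have "\<dots> \<le> \<bar>y - z\<bar>" using assms by (rule cf_fin_lipschitz)
  finally show ?thesis .
qed

lemma cf_approx_add:
  "cf_approx (n + m) b = cf_fin (map b [0..<n]) (cf_approx m (\<lambda>k. b (n + k)))"
  by (induction n arbitrary: b) (simp_all add: map_upt_Suc del: upt_Suc)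

lemma cf_approx_bounds:
  assumes "range b \<subseteq> {1, 2}"
  shows "1 \<le> cf_approx n b \<and> cf_approx n b \<le> 3"
  using assms
proof (induction n arbitrary: b)
  case 0
  then have "b 0 \<in> {1, 2}" by blast
  then show ?case by auto
next
  case (Suc n)
  let ?c = "\<lambda>k. b (Suc k)"
  have "range ?c \<subseteq> {1, 2}" using Suc.prems by auto
  then have "1 \<le> cf_approx n ?c \<and> cf_approx n ?c \<le> 3" by (rule Suc.IH)
  then have "0 < 1 / cf_approx n ?c" "1 / cf_approx n ?c \<le> 1" by auto
  moreover have "real (b 0) = 1 \<or> real (b 0) = 2" using Suc.prems by auto
  ultimately show ?case unfolding cf_approx.simps by (elim disjE) linarith+
qed

lemma cf_approx_LIMSEQ:
  assumes b: "range b \<subseteq> {1, 2}"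
  shows "(\<lambda>n. cf_approx n b) \<longlonglongrightarrow> cf b"
proof -
  have "Cauchy (\<lambda>n. cf_approx n b)"
  proof (rule metric_CauchyI)
    fix e :: real
    assume "0 < e"
    then obtain k where "(1 / 4 :: real) ^ k < e / 2"
      using real_arch_pow_inv[of "e / 2" "1 / 4"] by auto
    then have k: "2 / 4 ^ k < e" by (simp add: power_one_over field_simps)
    have "dist (cf_approx m b) (cf_approx n b) < e" if "2 * k \<le> m" "2 * k \<le> n" for m n
    proof -
      let ?xs = "map b [0..<2 * k]" and ?c = "\<lambda>j. b (2 * k + j)"
      let ?u = "cf_approx (m - 2 * k) ?c" and ?v = "cf_approx (n - 2 * k) ?c"
      have "range ?c \<subseteq> {1, 2}" using b by auto
      then have u: "1 \<le> ?u \<and> ?u \<le> 3" and v: "1 \<le> ?v \<and> ?v \<le> 3" using cf_approx_bounds by blast+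
      have "0 \<notin> range b" using b by auto
      then have "0 \<notin> set ?xs" by auto
      then have "\<bar>cf_fin ?xs ?u - cf_fin ?xs ?v\<bar> \<le> \<bar>?u - ?v\<bar> / 4 ^ k"
        using cf_fin_contract[of ?xs ?u ?v] u v by simp
      also have "\<dots> \<le> 2 / 4 ^ k" using u v by (intro divide_right_mono) auto
      also have "cf_fin ?xs ?u = cf_approx m b" using cf_approx_add[of "2 * k" "m - 2 * k" b] that by simp
      also have "cf_fin ?xs ?v = cf_approx n b" using cf_approx_add[of "2 * k" "n - 2 * k" b] that by simp
      finally show ?thesis using k by (simp add: dist_real_def)
    qed
    then show "\<exists>M. \<forall>m\<ge>M. \<forall>n\<ge>M. dist (cf_approx m b) (cf_approx n b) < e" by blast
  qed
  then show ?thesis unfolding cf_def by (simp add: Cauchy_convergent_iff convergent_LIMSEQ_iff)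
qed

lemma cf_ge_1:
  assumes "range b \<subseteq> {1, 2}"
  shows "1 \<le> cf b"
  using cf_approx_LIMSEQ[OF assms] cf_approx_bounds[OF assms] by (meson LIMSEQ_le_const)

lemma cf_Cons:
  assumes b: "range b \<subseteq> {1, 2}"
  shows "cf b = real (b 0) + 1 / cf (\<lambda>k. b (Suc k))"
proof -
  let ?c = "\<lambda>k. b (Suc k)"
  have c: "range ?c \<subseteq> {1, 2}" using b by auto
  then have "cf ?c \<noteq> 0" using cf_ge_1[OF c] by linarith
  then have "(\<lambda>n. real (b 0) + 1 / cf_approx n ?c) \<longlonglongrightarrow> real (b 0) + 1 / cf ?c"
    by (intro tendsto_intros cf_approx_LIMSEQ[OF c])
  then have "(\<lambda>n. cf_approx (Suc n) b) \<longlonglongrightarrow> real (b 0) + 1 / cf ?c" by simp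
  with LIMSEQ_Suc[OF cf_approx_LIMSEQ[OF b]] show ?thesis by (rule LIMSEQ_unique)
qed

lemma cf0_eq_inverse_cf:
  assumes a: "range a \<subseteq> {1, 2}"
  shows "cf0 a = 1 / cf a"
proof -
  let ?a = "\<lambda>n. if n = 0 then 0 else a (n - 1)"
  have "cf a \<noteq> 0" using cf_ge_1[OF a] by linarith
  then have "(\<lambda>n. 1 / cf_approx n a) \<longlonglongrightarrow> 1 / cf a"
    by (intro tendsto_intros cf_approx_LIMSEQ[OF a])
  moreover have "(\<lambda>n. cf_approx (Suc n) ?a) = (\<lambda>n. 1 / cf_approx n a)" by simp
  ultimately have "(\<lambda>n. cf_approx (Suc n) ?a) \<longlonglongrightarrow> 1 / cf a" by simp
  then have "(\<lambda>n. cf_approx n ?a) \<longlonglongrightarrow> 1 / cf a" by (rule LIMSEQ_imp_Suc)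
  then show ?thesis unfolding cf0_def cf_def by (rule limI)
qed

lemma cf0_pos:
  assumes "range a \<subseteq> {1, 2}"
  shows "0 < cf0 a"
  using cf0_eq_inverse_cf[OF assms] cf_ge_1[OF assms] by simp

lemma range_prepend_subset: "set xs \<subseteq> A \<Longrightarrow> range \<omega> \<subseteq> A \<Longrightarrow> range (prepend xs \<omega>) \<subseteq> A"
  by (auto simp: prepend_def)

lemma prepend_append: "prepend (xs @ ys) \<omega> = prepend xs (prepend ys \<omega>)"
  by (rule ext) (auto simp: prepend_def nth_append)

lemma prepend_append_length_add: "prepend (xs @ ys) \<omega> (length xs + n) = prepend ys \<omega> n"
  by (simp add: prepend_def nth_append)

lemma cf_prepend:
  assumes "range \<omega> \<subseteq> {1, 2}" "set xs \<subseteq> {1, 2}"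
  shows "cf (prepend xs \<omega>) = cf_fin xs (cf \<omega>)"
  using assms(2)
proof (induction xs)
  case Nil
  then show ?case by (simp add: prepend_def)
next
  case (Cons a xs)
  have "range (prepend (a # xs) \<omega>) \<subseteq> {1, 2}" using Cons.prems assms(1) by (rule range_prepend_subset)
  moreover have "(\<lambda>k. prepend (a # xs) \<omega> (Suc k)) = prepend xs \<omega>" by (auto simp: prepend_def)
  ultimately show ?case using cf_Cons Cons by (simp add: prepend_def)
qed

lemma cf0_prepend:
  assumes "range \<omega> \<subseteq> {1, 2}" "set xs \<subseteq> {1, 2}"
  shows "cf0 (prepend xs \<omega>) = 1 / cf_fin xs (cf \<omega>)"
proof -
  have "range (prepend xs \<omega>) \<subseteq> {1, 2}" using assms(2,1) by (rule range_prepend_subset)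
  then show ?thesis using cf0_eq_inverse_cf cf_prepend[OF assms] by simp
qed

lemma gamma_nonneg: "gamma \<beta> \<theta> \<omega>1 \<omega>2 (int n) = prepend (2 # \<theta> @ 2 # \<beta>) \<omega>1 n"
proof -
  consider "n = 0" | "1 \<le> n" "n \<le> length \<theta>" | "n = length \<theta> + 1"
    | "length \<theta> + 1 < n" "n \<le> length \<theta> + 1 + length \<beta>" | "length \<theta> + 1 + length \<beta> < n"
    by linarith
  then show ?thesis
  proof cases
    case 2
    then show ?thesis by (cases n) (simp_all add: gamma_def prepend_def nth_append)
  next
    case 4
    then show ?thesis by (cases n) (simp_all add: gamma_def prepend_def nth_append nth_Cons' nat_diff_distrib)
  qed (simp_all add: gamma_def prepend_def nth_append nat_diff_distrib)
qed

lemma gamma_neg: "gamma \<beta> \<theta> \<omega>1 \<omega>2 (- 1 - int n) = prepend \<beta> \<omega>2 n"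
  by (simp add: gamma_def prepend_def Let_def nat_diff_distrib)

lemma gamma_after_theta:
  "gamma \<beta> \<theta> \<omega>1 \<omega>2 (int (length \<theta>) + 1 + int n) = prepend (2 # \<beta>) \<omega>1 n"
proof -
  have index: "int (length \<theta>) + 1 + int n = int (length (2 # \<theta>) + n)" by simp
  show ?thesis
    unfolding index gamma_nonneg using prepend_append_length_add[of "2 # \<theta>" "2 # \<beta>" \<omega>1 n] by simp
qed

lemma gamma_backward_from_theta_end:
  "gamma \<beta> \<theta> \<omega>1 \<omega>2 (int (length \<theta>) - int n) = prepend (rev \<theta> @ 2 # \<beta>) \<omega>2 n"
proof -
  consider "n < length \<theta>" | "n = length \<theta>" | "length \<theta> < n" by linarith
  then show ?thesis
  proof cases
    case 1
    then have index: "int (length \<theta>) - int n = int (Suc (length \<theta> - Suc n))"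
      and "length \<theta> - Suc n < length \<theta>" by simp_all
    have "gamma \<beta> \<theta> \<omega>1 \<omega>2 (int (length \<theta>) - int n) = \<theta> ! (length \<theta> - Suc n)"
      unfolding index gamma_nonneg using \<open>length \<theta> - Suc n < length \<theta>\<close> by (simp add: prepend_def nth_append)
    moreover have "prepend (rev \<theta> @ 2 # \<beta>) \<omega>2 n = \<theta> ! (length \<theta> - Suc n)"
      using 1 by (simp add: prepend_def nth_append rev_nth)
    ultimately show ?thesis by simp
  next
    case 2
    then show ?thesis using gamma_nonneg[of \<beta> \<theta> \<omega>1 \<omega>2 0] by (simp add: prepend_def nth_append)
  next
    case 3
    then have "int (length \<theta>) - int n = - 1 - int (n - length (rev \<theta> @ [2]))" by simp
    then show ?thesis using 3 gamma_neg[of \<beta> \<theta> \<omega>1 \<omega>2 "n - length (rev \<theta> @ [2])"]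
      prepend_append_length_add[of "rev \<theta> @ [2]" \<beta> \<omega>2 "n - length (rev \<theta> @ [2])"]
      by simp
  qed
qed

lemma lam_0_gamma:
  assumes "set \<beta> \<subseteq> {1, 2}" "set \<theta> \<subseteq> {1, 2}" "range \<omega>1 \<subseteq> {1, 2}" "range \<omega>2 \<subseteq> {1, 2}"
  shows "lam 0 (gamma \<beta> \<theta> \<omega>1 \<omega>2)
    = 2 + 1 / cf_fin \<theta> (2 + cf0 (prepend \<beta> \<omega>1)) + cf0 (prepend \<beta> \<omega>2)"
proof -
  let ?P1 = "prepend \<beta> \<omega>1"
  have P1: "range ?P1 \<subseteq> {1, 2}" using assms(1,3) by (rule range_prepend_subset)
  have "(\<lambda>n. gamma \<beta> \<theta> \<omega>1 \<omega>2 (0 + int n)) = prepend (2 # \<theta> @ 2 # \<beta>) \<omega>1"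
    by (simp add: gamma_nonneg)
  also have "\<dots> = prepend (2 # \<theta> @ [2]) ?P1"
    using prepend_append[of "2 # \<theta> @ [2]" \<beta> \<omega>1] by simp
  finally have right: "(\<lambda>n. gamma \<beta> \<theta> \<omega>1 \<omega>2 (0 + int n)) = prepend (2 # \<theta> @ [2]) ?P1" .
  have left: "(\<lambda>n. gamma \<beta> \<theta> \<omega>1 \<omega>2 (0 - 1 - int n)) = prepend \<beta> \<omega>2"
    using gamma_neg by simp
  have "cf (prepend (2 # \<theta> @ [2]) ?P1) = 2 + 1 / cf_fin \<theta> (2 + 1 / cf ?P1)"
    using assms(2) by (simp add: cf_prepend[OF P1] cf_fin_append)
  then show ?thesis unfolding lam_def right left cf0_eq_inverse_cf[OF P1] by simp
qed

lemma lam_after_theta_gamma: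
  assumes "set \<beta> \<subseteq> {1, 2}" "set \<theta> \<subseteq> {1, 2}" "range \<omega>1 \<subseteq> {1, 2}" "range \<omega>2 \<subseteq> {1, 2}"
  shows "lam (int (length \<theta>) + 1) (gamma \<beta> \<theta> \<omega>1 \<omega>2)
    = 2 + cf0 (prepend \<beta> \<omega>1) + 1 / cf_fin (rev \<theta>) (2 + cf0 (prepend \<beta> \<omega>2))"
proof -
  let ?P1 = "prepend \<beta> \<omega>1" and ?P2 = "prepend \<beta> \<omega>2"
  have P1: "range ?P1 \<subseteq> {1, 2}" and P2: "range ?P2 \<subseteq> {1, 2}"
    using assms by (simp_all add: range_prepend_subset)
  have right: "(\<lambda>n. gamma \<beta> \<theta> \<omega>1 \<omega>2 (int (length \<theta>) + 1 + int n)) = prepend [2] ?P1"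
    using prepend_append[of "[2]" \<beta> \<omega>1] by (simp add: gamma_after_theta)
  have left: "(\<lambda>n. gamma \<beta> \<theta> \<omega>1 \<omega>2 (int (length \<theta>) + 1 - 1 - int n)) = prepend (rev \<theta> @ [2]) ?P2"
    using prepend_append[of "rev \<theta> @ [2]" \<beta> \<omega>2] by (simp add: gamma_backward_from_theta_end)
  have "cf (prepend [2] ?P1) = 2 + 1 / cf ?P1"
    by (simp add: cf_prepend[OF P1])
  moreover have "cf0 (prepend (rev \<theta> @ [2]) ?P2) = 1 / cf_fin (rev \<theta>) (2 + 1 / cf ?P2)"
    using assms(2) by (simp add: cf0_prepend[OF P2] cf_fin_append)
  ultimately show ?thesis
    unfolding lam_def right left cf0_eq_inverse_cf[OF P1] cf0_eq_inverse_cf[OF P2] by simp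
qed

lemma rev_eq_self_if_nth_sym:
  assumes "\<forall>j < length xs. xs ! j = xs ! (length xs - 1 - j)"
  shows "rev xs = xs"
proof (rule nth_equalityI)
  fix j assume "j < length (rev xs)"
  then show "rev xs ! j = xs ! j" using assms[rule_format, of j] by (simp add: rev_nth)
qed simp

lemma max_diag_le_max_cross:
  fixes h :: "real \<Rightarrow> real"
  assumes "antimono_on A h" "x1 \<in> A" "x2 \<in> A"
  shows "max (x1 + h x1) (x2 + h x2) \<le> max (h x1 + x2) (x1 + h x2)"
proof (cases "x1 \<le> x2")
  case True
  then have "h x2 \<le> h x1" using assms by (auto dest: monotone_onD)
  then show ?thesis using True by linarith
next
  case False
  then have "h x1 \<le> h x2" using assms by (auto dest: monotone_onD)
  then show ?thesis using False by linarith
qed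

theorem lemma2p1:
  fixes \<beta> \<theta> :: "nat list" and r :: nat and S :: "(nat \<Rightarrow> nat) set"
  assumes beta_alph: "set \<beta> \<subseteq> {1, 2}"
    and theta_alph: "set \<theta> \<subseteq> {1, 2}"
    and r_pos: "r \<ge> 1"
    and theta_len: "length \<theta> = 2 * r"
    and theta_sym: "\<forall>j < 2 * r. \<theta> ! j = \<theta> ! (2 * r - 1 - j)"
    and S_alph: "\<forall>\<omega> \<in> S. \<forall>n. \<omega> n \<in> {1, 2}"
    and S_max: "\<forall>\<omega>1 \<in> S. \<forall>\<omega>2 \<in> S.
        markov (gamma \<beta> \<theta> \<omega>1 \<omega>2)
          = max (lam 0 (gamma \<beta> \<theta> \<omega>1 \<omega>2)) (lam (2 * int r + 1) (gamma \<beta> \<theta> \<omega>1 \<omega>2))"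
  shows "(\<forall>\<omega>1 \<in> S. \<forall>\<omega>2 \<in> S.
            markov (gamma \<beta> \<theta> \<omega>1 \<omega>2)
              \<ge> max (markov (gamma \<beta> \<theta> \<omega>1 \<omega>1)) (markov (gamma \<beta> \<theta> \<omega>2 \<omega>2)))
       \<and> (\<forall>\<omega> \<in> S. \<forall>\<omega>' \<in> S.
            cf0 (prepend \<beta> \<omega>) \<le> cf0 (prepend \<beta> \<omega>')
              \<longrightarrow> markov (gamma \<beta> \<theta> \<omega> \<omega>) \<le> markov (gamma \<beta> \<theta> \<omega>' \<omega>'))"
proof -
  define X where "X \<omega> = cf0 (prepend \<beta> \<omega>)" for \<omega>
  define h where "h x = 1 / cf_fin \<theta> (2 + x)" for x :: real
  have digits: "range \<omega> \<subseteq> {1, 2}" if "\<omega> \<in> S" for \<omega>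
    using S_alph that by auto
  have X_nonneg: "X \<omega> \<in> {0..}" if "\<omega> \<in> S" for \<omega>
    using cf0_pos[OF range_prepend_subset[OF beta_alph digits[OF that]]] by (simp add: X_def)
  have "rev \<theta> = \<theta>" using theta_sym unfolding theta_len[symmetric] by (rule rev_eq_self_if_nth_sym)
  then have markov_gamma: "markov (gamma \<beta> \<theta> \<omega>1 \<omega>2) = 2 + max (h (X \<omega>1) + X \<omega>2) (X \<omega>1 + h (X \<omega>2))"
    if "\<omega>1 \<in> S" "\<omega>2 \<in> S" for \<omega>1 \<omega>2
  proof -
    have "markov (gamma \<beta> \<theta> \<omega>1 \<omega>2)
        = max (lam 0 (gamma \<beta> \<theta> \<omega>1 \<omega>2)) (lam (int (length \<theta>) + 1) (gamma \<beta> \<theta> \<omega>1 \<omega>2))"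
      using S_max that theta_len by simp
    then show ?thesis
      unfolding lam_0_gamma[OF beta_alph theta_alph digits[OF that(1)] digits[OF that(2)]]
        lam_after_theta_gamma[OF beta_alph theta_alph digits[OF that(1)] digits[OF that(2)]]
        \<open>rev \<theta> = \<theta>\<close> X_def h_def
      by (simp add: max_def)
  qed
  have theta_pos: "0 \<notin> set \<theta>" using theta_alph by auto
  have h_antimono: "antimono_on {0..} h"
    using inverse_cf_fin_antimono_even[OF theta_pos] theta_len by (intro monotone_onI) (simp add: h_def)
  have h_nonexpanding: "h x - h y \<le> y - x" if "0 \<le> x" "x \<le> y" for x y
    using inverse_cf_fin_lipschitz[OF theta_pos, of "2 + x" "2 + y"] that by (simp add: h_def)
  show ?thesis
  proof (intro conjI ballI impI)
    fix \<omega>1 \<omega>2 assume "\<omega>1 \<in> S" "\<omega>2 \<in> S"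
    then show "max (markov (gamma \<beta> \<theta> \<omega>1 \<omega>1)) (markov (gamma \<beta> \<theta> \<omega>2 \<omega>2)) \<le> markov (gamma \<beta> \<theta> \<omega>1 \<omega>2)"
      using max_diag_le_max_cross[OF h_antimono X_nonneg X_nonneg] by (simp add: markov_gamma add.commute)
  next
    fix \<omega> \<omega>' assume "\<omega> \<in> S" "\<omega>' \<in> S" "cf0 (prepend \<beta> \<omega>) \<le> cf0 (prepend \<beta> \<omega>')"
    then show "markov (gamma \<beta> \<theta> \<omega> \<omega>) \<le> markov (gamma \<beta> \<theta> \<omega>' \<omega>')"
      using h_nonexpanding[of "X \<omega>" "X \<omega>'"] X_nonneg by (simp add: markov_gamma X_def)
  qed
qed

end
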